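(* Let $\mathcal{A}:\mathbb{R}^{n_1\times n_2}\to\mathbb{R}^m$ be linear, $R\ge1$, $\alpha,\beta>0$, and let $\hat X=\sum_{r=1}^R\hat u^r(\hat v^r)^T$ with $\hat u^r\in\mathbb{R}^{n_1}$, $\hat v^r\in\mathbb{R}^{n_2}$. Let $\eta\in\mathbb{R}^m$ and $y=\mathcal{A}(\hat X)+\eta$. If $(u^1_{\alpha,\beta},\dots,u^R_{\alpha,\beta},v^1_{\alpha,\beta},\dots,v^R_{\alpha,\beta})$ is a global minimizer of $J^R_{\alpha,\beta}$ and $X_{\alpha,\beta}=\sum_{r=1}^R u^r_{\alpha,\beta}(v^r_{\alpha,\beta})^T$, then $$\|y-\mathcal{A}(X_{\alpha,\beta})\|_2^2\le\|\eta\|_2^2+C_{2,1}\sqrt[3]{\alpha\beta^2}\sum_{r=1}^R\left(\|\hat u^r\|_2\|\hat v^r\|_1\right)^{2/3}.$$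
   Context: For $y\in\mathbb{R}^m$ and $\alpha,\beta>0$, the functional $J^R_{\alpha,\beta}:(\mathbb{R}^{n_1})^R\times(\mathbb{R}^{n_2})^R\to\mathbb{R}$ is $$J^R_{\alpha,\beta}(u^1,\dots,u^R,v^1,\dots,v^R)=\Big\|y-\mathcal{A}\Big(\sum_{r=1}^Ru^r(v^r)^T\Big)\Big\|_2^2+\alpha\sum_{r=1}^R\|u^r\|_2^2+\beta\sum_{r=1}^R\|v^r\|_1.$$ The constant is $C_{2,1}=(1/2)^{2/3}+2^{1/3}$. *)

theory Defs
  imports "HOL-Analysis.Analysis"
begin

definition outer :: "real^'n1 \<Rightarrow> real^'n2 \<Rightarrow> real^'n2^'n1" where
  "outer u v = (\<chi> i j. u $ i * v $ j)"

definition norm1 :: "real^'n \<Rightarrow> real" where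
  "norm1 v = (\<Sum>i\<in>UNIV. \<bar>v $ i\<bar>)"

definition J :: "(real^'n2^'n1 \<Rightarrow> real^'m) \<Rightarrow> real^'m \<Rightarrow> real \<Rightarrow> real \<Rightarrow> nat
    \<Rightarrow> (nat \<Rightarrow> real^'n1) \<Rightarrow> (nat \<Rightarrow> real^'n2) \<Rightarrow> real" where
  "J A y \<alpha> \<beta> R u v =
     (norm (y - A (\<Sum>r=1..R. outer (u r) (v r))))\<^sup>2
     + \<alpha> * (\<Sum>r=1..R. (norm (u r))\<^sup>2) + \<beta> * (\<Sum>r=1..R. norm1 (v r))"

definition C21 :: real where
  "C21 = (1/2) powr (2/3) + 2 powr (1/3)"

end

theory Submission
  imports Defs
begin

text \<open>Rescaling each rank-one term \<open>\<hat>u\<^sup>r (\<hat>v\<^sup>r)\<^sup>T\<close> as \<open>(t \<hat>u\<^sup>r)(\<hat>v\<^sup>r/t)\<^sup>T\<close> leaves the data term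
  of \<open>J\<close> unchanged, and choosing \<open>t\<close> to minimise \<open>\<alpha> t\<^sup>2 a\<^sup>2 + \<beta> b / t\<close> (with \<open>a = \<parallel>\<hat>u\<^sup>r\<parallel>\<^sub>2\<close>,
  \<open>b = \<parallel>\<hat>v\<^sup>r\<parallel>\<^sub>1\<close>) makes the penalty of that term exactly \<open>C\<^sub>2\<^sub>,\<^sub>1 (\<alpha>\<beta>\<^sup>2)\<^sup>1\<^sup>/\<^sup>3 (ab)\<^sup>2\<^sup>/\<^sup>3\<close>.
  The competitor reproduces \<open>\<hat>X\<close>, so its data term is \<open>\<parallel>\<eta>\<parallel>\<^sup>2\<close>; comparing it with the minimiser
  and dropping the minimiser's nonnegative penalty gives the bound.\<close>

lemma C21_eq_root: "C21 = 1 / (root 3 2)\<^sup>2 + root 3 2"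
proof -
  have "(1/2::real) powr (2/3) = 1 / (root 3 2)\<^sup>2"
    by (simp add: powr_divide root_powr_inverse powr_realpow[symmetric] powr_powr)
  moreover have "(2::real) powr (1/3) = root 3 2"
    by (simp add: root_powr_inverse)
  ultimately show ?thesis
    unfolding C21_def by simp
qed

lemma powr_two_thirds_eq_root: "0 \<le> x \<Longrightarrow> x powr (2/3) = (root 3 x)\<^sup>2"
  by (cases "x = 0") (simp_all add: root_powr_inverse powr_realpow[symmetric] powr_powr)

lemma balanced_split_eq:
  fixes a b \<alpha> \<beta> :: real
  assumes "a > 0" "b > 0" "\<alpha> > 0" "\<beta> > 0"
  shows "\<exists>t>0. \<alpha> * (t * a)\<^sup>2 + \<beta> * (b / t) = C21 * root 3 (\<alpha> * \<beta>\<^sup>2) * (a * b) powr (2/3)"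
proof -
  define x z c d p where "x = root 3 a" and "z = root 3 b" and "c = root 3 \<alpha>"
    and "d = root 3 \<beta>" and "p = root 3 (2::real)"
  have pos: "x > 0" "z > 0" "c > 0" "d > 0" "p > 0"
    using assms by (simp_all add: x_def z_def c_def d_def p_def)
  have cubes: "a = x ^ 3" "b = z ^ 3" "\<alpha> = c ^ 3" "\<beta> = d ^ 3"
    using assms by (simp_all add: x_def z_def c_def d_def)
  \<comment> \<open>the stationary point \<open>t\<^sup>3 = \<beta> b / (2 \<alpha> a\<^sup>2)\<close> of \<open>t \<mapsto> \<alpha> t\<^sup>2 a\<^sup>2 + \<beta> b / t\<close>\<close>
  define t where "t = d * z / (p * c * x\<^sup>2)"
  have "t > 0"
    using pos by (simp add: t_def)
  have "\<alpha> * (t * a)\<^sup>2 = c * d\<^sup>2 * (x * z)\<^sup>2 / p\<^sup>2"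
    using pos unfolding cubes t_def by (simp add: field_simps power2_eq_square power3_eq_cube)
  moreover have "\<beta> * (b / t) = p * c * d\<^sup>2 * (x * z)\<^sup>2"
    using pos unfolding cubes t_def by (simp add: field_simps power2_eq_square power3_eq_cube)
  moreover have "root 3 (\<alpha> * \<beta>\<^sup>2) = c * d\<^sup>2" "(a * b) powr (2/3) = (x * z)\<^sup>2"
    using assms by (simp_all add: c_def d_def x_def z_def real_root_mult real_root_power
        powr_two_thirds_eq_root)
  ultimately have "\<alpha> * (t * a)\<^sup>2 + \<beta> * (b / t) = C21 * root 3 (\<alpha> * \<beta>\<^sup>2) * (a * b) powr (2/3)"
    by (simp add: C21_eq_root p_def algebra_simps add_divide_distrib)
  then show ?thesis
    using \<open>t > 0\<close> by blast
qed

lemma norm1_nonneg: "0 \<le> norm1 v"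
  unfolding norm1_def by (simp add: sum_nonneg)

lemma norm1_scaleR: "norm1 (s *\<^sub>R v) = \<bar>s\<bar> * norm1 v"
  unfolding norm1_def by (simp add: sum_distrib_left abs_mult)

lemma norm1_eq_0_iff: "norm1 v = 0 \<longleftrightarrow> v = 0"
  unfolding norm1_def by (simp add: sum_nonneg_eq_0_iff vec_eq_iff)

lemma outer_scaleR_inverse: "t \<noteq> 0 \<Longrightarrow> outer (t *\<^sub>R u) ((1/t) *\<^sub>R v) = outer u v"
  unfolding outer_def by (simp add: vec_eq_iff)

lemma outer_zero_left: "outer 0 v = 0"
  unfolding outer_def by (simp add: vec_eq_iff)

lemma outer_zero_right: "outer u 0 = 0"
  unfolding outer_def by (simp add: vec_eq_iff)

lemma outer_rebalance:
  fixes u :: "real^'n1" and v :: "real^'n2" and \<alpha> \<beta> :: real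
  assumes "\<alpha> > 0" "\<beta> > 0"
  shows "\<exists>u' v'. outer u' v' = outer u v \<and>
    \<alpha> * (norm u')\<^sup>2 + \<beta> * norm1 v' = C21 * root 3 (\<alpha> * \<beta>\<^sup>2) * (norm u * norm1 v) powr (2/3)"
proof (cases "u = 0 \<or> v = 0")
  case True
  then show ?thesis
    by (intro exI[of _ 0]) (auto simp: outer_zero_left outer_zero_right norm1_def)
next
  case False
  then have "norm u > 0" "norm1 v > 0"
    using norm1_nonneg[of v] norm1_eq_0_iff[of v] by auto
  then obtain t where "t > 0" and
    t: "\<alpha> * (t * norm u)\<^sup>2 + \<beta> * (norm1 v / t) = C21 * root 3 (\<alpha> * \<beta>\<^sup>2) * (norm u * norm1 v) powr (2/3)"
    using balanced_split_eq assms by blast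
  show ?thesis
  proof (intro exI conjI)
    show "outer (t *\<^sub>R u) ((1/t) *\<^sub>R v) = outer u v"
      using \<open>t > 0\<close> by (simp add: outer_scaleR_inverse)
    show "\<alpha> * (norm (t *\<^sub>R u))\<^sup>2 + \<beta> * norm1 ((1/t) *\<^sub>R v) = C21 * root 3 (\<alpha> * \<beta>\<^sup>2) * (norm u * norm1 v) powr (2/3)"
      using \<open>t > 0\<close> t by (simp add: norm1_scaleR)
  qed
qed

lemma residual_le_J:
  assumes "\<alpha> \<ge> 0" "\<beta> \<ge> 0"
  shows "(norm (y - A (\<Sum>r=1..R. outer (u r) (v r))))\<^sup>2 \<le> J A y \<alpha> \<beta> R u v"
  unfolding J_def using assms by (simp add: sum_nonneg norm1_nonneg)

theorem mainTheorem2: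
  fixes A :: "real^'n2^'n1 \<Rightarrow> real^'m"
    and R :: nat and \<alpha> \<beta> :: real
    and uh u :: "nat \<Rightarrow> real^'n1" and vh v :: "nat \<Rightarrow> real^'n2"
    and \<eta> y :: "real^'m"
  assumes "linear A"
    and "R \<ge> 1" and "\<alpha> > 0" and "\<beta> > 0"
    and "y = A (\<Sum>r=1..R. outer (uh r) (vh r)) + \<eta>"
    and "\<forall>u' v'. J A y \<alpha> \<beta> R u v \<le> J A y \<alpha> \<beta> R u' v'"
  shows "(norm (y - A (\<Sum>r=1..R. outer (u r) (v r))))\<^sup>2
     \<le> (norm \<eta>)\<^sup>2 + C21 * root 3 (\<alpha> * \<beta>\<^sup>2)
        * (\<Sum>r=1..R. (norm (uh r) * norm1 (vh r)) powr (2/3))"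
proof -
  have "\<forall>r. \<exists>u' v'. outer u' v' = outer (uh r) (vh r) \<and> \<alpha> * (norm u')\<^sup>2 + \<beta> * norm1 v'
      = C21 * root 3 (\<alpha> * \<beta>\<^sup>2) * (norm (uh r) * norm1 (vh r)) powr (2/3)"
    using outer_rebalance[OF assms(3,4)] by blast
  then obtain u' v' where outer_eq: "\<And>r. outer (u' r) (v' r) = outer (uh r) (vh r)"
    and penalty_eq: "\<And>r. \<alpha> * (norm (u' r))\<^sup>2 + \<beta> * norm1 (v' r)
      = C21 * root 3 (\<alpha> * \<beta>\<^sup>2) * (norm (uh r) * norm1 (vh r)) powr (2/3)"
    by metis
  have "(norm (y - A (\<Sum>r=1..R. outer (u r) (v r))))\<^sup>2 \<le> J A y \<alpha> \<beta> R u v"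
    using assms(3,4) by (intro residual_le_J) simp_all
  also have "\<dots> \<le> J A y \<alpha> \<beta> R u' v'"
    using assms(6) by blast
  also have "\<dots> = (norm \<eta>)\<^sup>2 + (\<Sum>r=1..R. \<alpha> * (norm (u' r))\<^sup>2 + \<beta> * norm1 (v' r))"
    unfolding J_def by (simp add: outer_eq assms(5) sum.distrib sum_distrib_left)
  also have "\<dots> = (norm \<eta>)\<^sup>2 + C21 * root 3 (\<alpha> * \<beta>\<^sup>2)
        * (\<Sum>r=1..R. (norm (uh r) * norm1 (vh r)) powr (2/3))"
    by (simp add: penalty_eq sum_distrib_left)
  finally show ?thesis .
qed

end
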